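(* For every $n\ge 2$, $\gamma_{\rm i}(P_n^2)\ge 3\lfloor n/8\rfloor$.
   Context: $P_n$ is the path on $n$ vertices and $P_n^2$ its square (same vertex set, two vertices adjacent iff their distance in $P_n$ is $1$ or $2$). Indicated domination game on a graph $G$: two players, Dominator and Staller, alternate. In each round Dominator indicates a vertex $v$ not yet dominated by the vertices previously selected by Staller (a vertex dominates itself and its neighbors), and Staller must select a vertex of the closed neighborhood $N[v]$, adding it to a set $D$. The game ends when $D$ is a dominating set of $G$. Dominator wants to minimize $|D|$ and Staller to maximize it; the size of $D$ under optimal play of both is the indicated domination number $\gamma_{\rm i}(G)$. *)

theory Defs
  imports Main
begin

text \<open>A finite simple graph is given by a vertex set V and a symmetric adjacency
relation E (only pairs within V are relevant).\<close>

definition cnbr :: "'a set \<Rightarrow> ('a \<Rightarrow> 'a \<Rightarrow> bool) \<Rightarrow> 'a \<Rightarrow> 'a set" where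
  "cnbr V E v = {u \<in> V. u = v \<or> E v u}"

definition dominated_by :: "'a set \<Rightarrow> ('a \<Rightarrow> 'a \<Rightarrow> bool) \<Rightarrow> 'a set \<Rightarrow> 'a \<Rightarrow> bool" where
  "dominated_by V E D v \<longleftrightarrow> (\<exists>d\<in>D. v \<in> cnbr V E d)"

definition dominating :: "'a set \<Rightarrow> ('a \<Rightarrow> 'a \<Rightarrow> bool) \<Rightarrow> 'a set \<Rightarrow> bool" where
  "dominating V E D \<longleftrightarrow> (\<forall>v\<in>V. dominated_by V E D v)"

text \<open>dom_wins V E D k: from the position in which Staller has selected the set D,
Dominator has a strategy guaranteeing that the game ends with at most k selected
vertices, whatever Staller does.\<close>

inductive dom_wins :: "'a set \<Rightarrow> ('a \<Rightarrow> 'a \<Rightarrow> bool) \<Rightarrow> 'a set \<Rightarrow> nat \<Rightarrow> bool"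
  for V E where
  finished: "dominating V E D \<Longrightarrow> card D \<le> k \<Longrightarrow> dom_wins V E D k"
| indicate: "\<not> dominating V E D \<Longrightarrow> v \<in> V \<Longrightarrow> \<not> dominated_by V E D v \<Longrightarrow>
     (\<forall>u\<in>cnbr V E v. dom_wins V E (insert u D) k) \<Longrightarrow> dom_wins V E D k"

definition indicated_domination_number :: "'a set \<Rightarrow> ('a \<Rightarrow> 'a \<Rightarrow> bool) \<Rightarrow> nat" where
  "indicated_domination_number V E = (LEAST k. dom_wins V E {} k)"

text \<open>Square of the path P_n on vertices 0..n-1.\<close>
definition path_sq_adj :: "nat \<Rightarrow> nat \<Rightarrow> bool" where
  "path_sq_adj i j \<longleftrightarrow> (i \<noteq> j \<and> (if i \<le> j then j - i else i - j) \<le> 2)"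

end

theory Submission
  imports Defs
begin

(* Staller can keep the potential |D| + \<Sum> \<lfloor>(3 l + w) / 8\<rfloor> from decreasing, where the sum
   ranges over the maximal runs of undominated vertices, l is the length of a run and w = 0, 4
   or 10 according as 0, 1 or 2 of its sides are selected vertices rather than ends of the path.
   Selecting the vertex at position c of a run of length l replaces it by runs of lengths c - 2
   and l - 3 - c; among the vertices within distance 2 of an indicated one, Staller finds one
   for which the costs of the two new runs add up to at least the old cost minus 1.  As costs
   grow by exactly 3 per 8 vertices, this is a finite check on residues mod 8.  The potential
   starts at \<lfloor>3n/8\<rfloor> and ends at |D|, so Staller forces at least \<lfloor>3n/8\<rfloor> \<ge> 3 \<lfloor>n/8\<rfloor>
   selected vertices. *)

lemma path_sq_adj_sym: "path_sq_adj u v \<Longrightarrow> path_sq_adj v u"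
  unfolding path_sq_adj_def by auto

lemma path_sq_cnbr_iff:
  "u \<in> cnbr {0..<n} path_sq_adj v \<longleftrightarrow> u < n \<and> u \<le> v + 2 \<and> v \<le> u + 2"
  unfolding cnbr_def path_sq_adj_def by auto

lemma path_sq_dominated_by_iff:
  assumes "v < n"
  shows "dominated_by {0..<n} path_sq_adj D v \<longleftrightarrow> (\<exists>d\<in>D. d \<le> v + 2 \<and> v \<le> d + 2)"
  using assms unfolding dominated_by_def path_sq_cnbr_iff by auto

lemma dom_wins_card:
  assumes "finite V" and sym: "\<And>u v. E u v \<Longrightarrow> E v u" and "D \<subseteq> V"
  shows "dom_wins V E D (card V)"
  using assms(3)
proof (induction "card V - card D" arbitrary: D rule: less_induct)
  case less
  have card_D: "card D \<le> card V" using card_mono[OF \<open>finite V\<close> less.prems] .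
  show ?case
  proof (cases "dominating V E D")
    case True
    then show ?thesis using card_D by (rule dom_wins.finished)
  next
    case False
    then obtain v where v: "v \<in> V" "\<not> dominated_by V E D v"
      unfolding dominating_def by blast
    have "dom_wins V E (insert u D) (card V)" if u: "u \<in> cnbr V E v" for u
    proof -
      have "u \<notin> D"
        using u v(2) sym unfolding dominated_by_def cnbr_def by (auto simp: \<open>v \<in> V\<close>)
      moreover have sub: "insert u D \<subseteq> V" using u less.prems unfolding cnbr_def by blast
      ultimately have "card V - card (insert u D) < card V - card D"
        using card_mono[OF \<open>finite V\<close> sub] finite_subset[OF less.prems \<open>finite V\<close>] by simp
      then show ?thesis using less.hyps sub by blast
    qed
    then show ?thesis using dom_wins.indicate[OF False v] by blast
  qed
qed

lemma dom_wins_indicated_domination_number: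
  assumes "finite V" "\<And>u v. E u v \<Longrightarrow> E v u"
  shows "dom_wins V E {} (indicated_domination_number V E)"
  unfolding indicated_domination_number_def
  using dom_wins_card[OF assms empty_subsetI] by (rule LeastI)

(* What bounds a run of undominated vertices on one side: an end of the path or a selected vertex. *)
datatype side = Border | Taken

fun side_weight :: "side \<Rightarrow> side \<Rightarrow> int" where
  "side_weight Border Border = 0"
| "side_weight Taken Taken = 10"
| "side_weight _ _ = 4"

definition run_cost :: "side \<Rightarrow> side \<Rightarrow> int \<Rightarrow> int" where
  "run_cost l r x = (if x \<le> 0 then 0 else (3 * x + side_weight l r) div 8)"

(* The cost of a run of length 8 q + m beyond the 3 q of its full blocks; short means q = 0. *)
definition run_cost_residue :: "side \<Rightarrow> side \<Rightarrow> bool \<Rightarrow> int \<Rightarrow> int" where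
  "run_cost_residue l r short m = (if short \<and> m \<le> 0 then 0 else (3 * m + side_weight l r) div 8)"

lemma run_cost_mod_8:
  assumes "x = 8 * q + m" "0 \<le> q" "-8 < m"
  shows "run_cost l r x = 3 * q + run_cost_residue l r (q = 0) m"
proof (cases "q = 0")
  case True
  then show ?thesis using assms by (simp add: run_cost_def run_cost_residue_def)
next
  case False
  have "3 * x + side_weight l r = (3 * m + side_weight l r) + (3 * q) * 8"
    using assms(1) by simp
  then have "(3 * x + side_weight l r) div 8 = 3 * q + (3 * m + side_weight l r) div 8"
    by simp
  moreover have "x > 0" using assms False by linarith
  ultimately show ?thesis using False by (simp add: run_cost_def run_cost_residue_def)
qed

(* s and t are the residues mod 8 of the distances from the indicated vertex to the two ends of
   the run, d is the offset of Staller's reply. *)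
lemma run_cost_residue_table:
  "\<forall>l\<in>set [Border, Taken]. \<forall>r\<in>set [Border, Taken].
   \<forall>short_l\<in>set [False, True]. \<forall>short_r\<in>set [False, True].
   \<forall>s\<in>set [0..7]. \<forall>t\<in>set [0..7]. \<exists>d\<in>set [-2..2::int].
     (l = Border \<and> short_l \<longrightarrow> 0 \<le> s + d) \<and> (r = Border \<and> short_r \<longrightarrow> d \<le> t) \<and>
     (3 * (s + t + 1) + side_weight l r) div 8
       \<le> run_cost_residue l Taken short_l (s + d - 2) + run_cost_residue Taken r short_r (t - 2 - d) + 1"
  by code_simp

lemma run_cost_split:
  assumes "0 \<le> p" "p < L"
  obtains c where "p - 2 \<le> c" "c \<le> p + 2" "l = Border \<Longrightarrow> 0 \<le> c" "r = Border \<Longrightarrow> c < L"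
    "run_cost l r L \<le> run_cost l Taken (c - 2) + run_cost Taken r (L - 3 - c) + 1"
proof -
  define ql s qr t where "ql = p div 8" "s = p mod 8" "qr = (L - 1 - p) div 8" "t = (L - 1 - p) mod 8"
  have p: "p = 8 * ql + s" and L: "L - 1 - p = 8 * qr + t"
    unfolding ql_s_qr_t_def by simp_all
  have range: "0 \<le> s" "s < 8" "0 \<le> t" "t < 8" "0 \<le> ql" "0 \<le> qr"
    unfolding ql_s_qr_t_def using assms by simp_all
  have l: "l \<in> set [Border, Taken]" by (cases l) simp_all
  have r: "r \<in> set [Border, Taken]" by (cases r) simp_all
  have bool: "b \<in> set [False, True]" for b by simp
  have s: "s \<in> set [0..7]" and t: "t \<in> set [0..7]" using range by simp_all
  obtain d where "d \<in> set [-2..2]"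
    and border_l: "l = Border \<and> ql = 0 \<longrightarrow> 0 \<le> s + d"
    and border_r: "r = Border \<and> qr = 0 \<longrightarrow> d \<le> t"
    and cost: "(3 * (s + t + 1) + side_weight l r) div 8
       \<le> run_cost_residue l Taken (ql = 0) (s + d - 2) + run_cost_residue Taken r (qr = 0) (t - 2 - d) + 1"
    using run_cost_residue_table[rule_format, OF l r bool bool s t] by blast
  then have d: "-2 \<le> d" "d \<le> 2" by auto
  have whole: "run_cost l r L = 3 * (ql + qr) + (3 * (s + t + 1) + side_weight l r) div 8"
    using run_cost_mod_8[of L "ql + qr" "s + t + 1"] p L range by (simp add: run_cost_residue_def)
  have left: "run_cost l Taken (p + d - 2) = 3 * ql + run_cost_residue l Taken (ql = 0) (s + d - 2)"
    by (rule run_cost_mod_8) (use p range d in auto)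
  have right: "run_cost Taken r (L - 3 - (p + d)) = 3 * qr + run_cost_residue Taken r (qr = 0) (t - 2 - d)"
    by (rule run_cost_mod_8) (use L range d in auto)
  show thesis
  proof (rule that[of "p + d"])
    show "run_cost l r L \<le> run_cost l Taken (p + d - 2) + run_cost Taken r (L - 3 - (p + d)) + 1"
      unfolding whole left right using cost by simp
  qed (use d border_l border_r p L range in auto)
qed

definition run_start :: "nat option \<Rightarrow> int" where
  "run_start prev = (case prev of None \<Rightarrow> 0 | Some x \<Rightarrow> int x + 3)"

definition run_side :: "nat option \<Rightarrow> side" where
  "run_side prev = (case prev of None \<Rightarrow> Border | Some _ \<Rightarrow> Taken)"

(* runs_cost n prev xs: the cost of the undominated runs right of the selected vertex prev
   (None: from vertex 0 on), xs being the further selected vertices in increasing order.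
   A selected vertex x dominates x - 2, ..., x + 2, so the run after it starts at x + 3. *)
fun runs_cost :: "nat \<Rightarrow> nat option \<Rightarrow> nat list \<Rightarrow> int" where
  "runs_cost n prev [] = run_cost (run_side prev) Border (int n - run_start prev)"
| "runs_cost n prev (y # ys) =
     run_cost (run_side prev) Taken (int y - 2 - run_start prev) + runs_cost n (Some y) ys"

lemma run_start_nonneg: "0 \<le> run_start prev"
  by (cases prev) (simp_all add: run_start_def)

lemma run_cost_split_after:
  assumes "run_start prev \<le> int v" "int v < e"
  obtains u where "u \<le> v + 2" "v \<le> u + 2" "r = Border \<Longrightarrow> int u < e"
    "run_cost (run_side prev) r (e - run_start prev)
       \<le> run_cost (run_side prev) Taken (int u - 2 - run_start prev)
         + run_cost Taken r (e - 3 - int u) + 1"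
proof -
  have p: "0 \<le> int v - run_start prev" "int v - run_start prev < e - run_start prev"
    using assms by simp_all
  obtain c where c: "int v - run_start prev - 2 \<le> c" "c \<le> int v - run_start prev + 2"
    and border_l: "run_side prev = Border \<Longrightarrow> 0 \<le> c"
    and border_r: "r = Border \<Longrightarrow> c < e - run_start prev"
    and cost: "run_cost (run_side prev) r (e - run_start prev)
       \<le> run_cost (run_side prev) Taken (c - 2) + run_cost Taken r (e - run_start prev - 3 - c) + 1"
    using run_cost_split[OF p, where l = "run_side prev" and r = r] by blast
  have "0 \<le> run_start prev + c"
    using c border_l assms(1) by (cases prev) (auto simp: run_start_def run_side_def)
  then obtain u where u: "int u = run_start prev + c"
    using nonneg_int_cases by metis
  show thesis
  proof (rule that[of u])
    show "run_cost (run_side prev) r (e - run_start prev)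
       \<le> run_cost (run_side prev) Taken (int u - 2 - run_start prev)
         + run_cost Taken r (e - 3 - int u) + 1"
      using cost u by (simp add: algebra_simps)
  qed (use c u border_r in auto)
qed

lemma runs_cost_reply:
  assumes "sorted_wrt (<) xs" "\<forall>y\<in>set xs. y < n" "v < n" "run_start prev \<le> int v"
    "\<forall>y\<in>set xs. v + 3 \<le> y \<or> y + 3 \<le> v"
  shows "\<exists>u<n. u \<le> v + 2 \<and> v \<le> u + 2 \<and> runs_cost n prev xs \<le> runs_cost n prev (insort u xs) + 1"
  using assms
proof (induction xs arbitrary: prev)
  case Nil
  obtain u where u: "u \<le> v + 2" "v \<le> u + 2" "int u < int n"
    and cost: "run_cost (run_side prev) Border (int n - run_start prev)
       \<le> run_cost (run_side prev) Taken (int u - 2 - run_start prev)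
         + run_cost Taken Border (int n - 3 - int u) + 1"
    using run_cost_split_after[OF Nil.prems(4), of "int n" Border] Nil.prems(3) by auto
  have "runs_cost n prev (insort u []) =
      run_cost (run_side prev) Taken (int u - 2 - run_start prev) + run_cost Taken Border (int n - 3 - int u)"
    by (simp add: run_start_def run_side_def algebra_simps)
  then show ?case using u cost by auto
next
  case (Cons y ys)
  show ?case
  proof (cases "v + 3 \<le> y")
    case True
    obtain u where u: "u \<le> v + 2" "v \<le> u + 2"
      and cost: "run_cost (run_side prev) Taken (int y - 2 - run_start prev)
         \<le> run_cost (run_side prev) Taken (int u - 2 - run_start prev)
           + run_cost Taken Taken (int y - 2 - 3 - int u) + 1"
      using run_cost_split_after[of prev v "int y - 2" Taken] Cons.prems(4) True by auto
    have "u < y" using u True by simp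
    then have "runs_cost n prev (insort u (y # ys)) =
        run_cost (run_side prev) Taken (int u - 2 - run_start prev)
        + run_cost Taken Taken (int y - 2 - 3 - int u) + runs_cost n (Some y) ys"
      by (simp add: run_start_def run_side_def algebra_simps)
    moreover have "u < n" using \<open>u < y\<close> Cons.prems(2) by simp
    ultimately show ?thesis using u cost by auto
  next
    case False
    then have "y + 3 \<le> v" using Cons.prems(5) by simp
    then obtain u where u: "u < n" "u \<le> v + 2" "v \<le> u + 2"
      "runs_cost n (Some y) ys \<le> runs_cost n (Some y) (insort u ys) + 1"
      using Cons.IH[of "Some y"] Cons.prems by (auto simp: run_start_def)
    have "insort u (y # ys) = y # insort u ys" using u \<open>y + 3 \<le> v\<close> by simp
    then have "runs_cost n prev (y # ys) \<le> runs_cost n prev (insort u (y # ys)) + 1"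
      using u(4) by simp
    then show ?thesis using u(1-3) by blast
  qed
qed

lemma runs_cost_eq_0:
  assumes "sorted_wrt (<) xs" "\<forall>y\<in>set xs. y < n" "\<forall>x\<in>set_option prev. \<forall>y\<in>set xs. x < y"
    "\<forall>v<n. run_start prev \<le> int v \<longrightarrow> (\<exists>y\<in>set xs. y \<le> v + 2 \<and> v \<le> y + 2)"
  shows "runs_cost n prev xs = 0"
  using assms
proof (induction xs arbitrary: prev)
  case Nil
  obtain w where w: "int w = run_start prev"
    using run_start_nonneg nonneg_int_cases by metis
  then have "\<not> w < n" using Nil.prems(4)[rule_format, of w] by auto
  then show ?case using w by (simp add: run_cost_def)
next
  case (Cons y ys)
  obtain w where w: "int w = run_start prev"
    using run_start_nonneg nonneg_int_cases by metis
  have "\<not> w + 2 < y"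
  proof
    assume "w + 2 < y"
    moreover have "y < n" using Cons.prems(2) by simp
    ultimately have "w < n" by simp
    then have "\<exists>z\<in>set (y # ys). z \<le> w + 2 \<and> w \<le> z + 2"
      using Cons.prems(4) w by simp
    then obtain z where "z \<in> set (y # ys)" "z \<le> w + 2" by blast
    then show False using Cons.prems(1) \<open>w + 2 < y\<close> by auto
  qed
  moreover have "runs_cost n (Some y) ys = 0"
  proof (rule Cons.IH)
    show "\<forall>v<n. run_start (Some y) \<le> int v \<longrightarrow> (\<exists>z\<in>set ys. z \<le> v + 2 \<and> v \<le> z + 2)"
    proof (intro allI impI)
      fix v
      assume "v < n" "run_start (Some y) \<le> int v"
      then have "y + 3 \<le> v" by (simp add: run_start_def)
      moreover have "run_start prev \<le> int y + 3"
        using Cons.prems(3) by (cases prev) (auto simp: run_start_def)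
      ultimately have "run_start prev \<le> int v" by linarith
      then obtain z where "z \<in> set (y # ys)" "z \<le> v + 2" "v \<le> z + 2"
        using Cons.prems(4)[rule_format, of v] \<open>v < n\<close> by blast
      then show "\<exists>z\<in>set ys. z \<le> v + 2 \<and> v \<le> z + 2"
        using \<open>y + 3 \<le> v\<close> by auto
    qed
  qed (use Cons.prems in auto)
  ultimately show ?case using w by (simp add: run_cost_def)
qed

lemma dom_wins_card_runs_cost_le:
  assumes "dom_wins {0..<n} path_sq_adj D k" "D \<subseteq> {0..<n}"
  shows "int (card D) + runs_cost n None (sorted_list_of_set D) \<le> int k"
  using assms
proof (induction rule: dom_wins.induct)
  case (finished D k)
  have "finite D" using finished.prems finite_subset by blast
  have "runs_cost n None (sorted_list_of_set D) = 0"
  proof (rule runs_cost_eq_0)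
    show "\<forall>v<n. run_start None \<le> int v \<longrightarrow>
        (\<exists>y\<in>set (sorted_list_of_set D). y \<le> v + 2 \<and> v \<le> y + 2)"
      using finished.hyps(1) \<open>finite D\<close> path_sq_dominated_by_iff
      unfolding dominating_def by auto
  qed (use \<open>finite D\<close> finished.prems in auto)
  then show ?case using finished.hyps(2) by simp
next
  case (indicate D v k)
  have "finite D" using indicate.prems finite_subset by blast
  have "v < n" using indicate.hyps(2) by simp
  then have far: "\<forall>d\<in>D. v + 3 \<le> d \<or> d + 3 \<le> v"
    using indicate.hyps(3) path_sq_dominated_by_iff by force
  have "\<exists>u<n. u \<le> v + 2 \<and> v \<le> u + 2 \<and>
      runs_cost n None (sorted_list_of_set D) \<le> runs_cost n None (insort u (sorted_list_of_set D)) + 1"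
    by (rule runs_cost_reply)
      (use \<open>v < n\<close> far \<open>finite D\<close> indicate.prems in \<open>auto simp: run_start_def\<close>)
  then obtain u where u: "u < n" "u \<le> v + 2" "v \<le> u + 2"
    and cost: "runs_cost n None (sorted_list_of_set D)
      \<le> runs_cost n None (insort u (sorted_list_of_set D)) + 1"
    by blast
  have "u \<notin> D" using far u by force
  moreover have "u \<in> cnbr {0..<n} path_sq_adj v" using u path_sq_cnbr_iff by simp
  ultimately have "int (card D + 1) + runs_cost n None (insort u (sorted_list_of_set D)) \<le> int k"
    using indicate.IH indicate.prems u(1) \<open>finite D\<close> by auto
  then show ?case using cost by simp
qed

theorem corollary6p2:
  fixes n :: nat
  assumes "n \<ge> 2"
  shows "indicated_domination_number {0..<n} path_sq_adj \<ge> 3 * (n div 8)"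
proof -
  have "dom_wins {0..<n} path_sq_adj {} (indicated_domination_number {0..<n} path_sq_adj)"
    by (rule dom_wins_indicated_domination_number) (auto intro: path_sq_adj_sym)
  then have "runs_cost n None [] \<le> int (indicated_domination_number {0..<n} path_sq_adj)"
    using dom_wins_card_runs_cost_le by fastforce
  moreover have "runs_cost n None [] = 3 * int n div 8"
    using assms by (simp add: run_cost_def run_start_def run_side_def)
  moreover have "3 * int (n div 8) \<le> 3 * int n div 8"
    by simp
  ultimately show ?thesis by linarith
qed

end
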